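(* Let $c\in(0,1/2)$ and $\bar\mu\in[-1+c,1-c]^n$, and let $\mu=\bar\mu+\Delta$ where $\Delta$ is chosen uniformly at random from $[-c,c]^n$. Let $f:\mathbb{R}^n\to\mathbb{R}$ be any multilinear function, written as $f(x)=\sum_{S\subseteq N}\bar f(S,\mu)\,(x-\mu)_S$. Then for any $T\subseteq U\subseteq N$ and any $a,b>0$, $$\Pr_{\Delta}\Big[\,|\bar f(T,\mu)|\leq a \;\Big|\; |\bar f(U,\mu)|\geq b\,\Big] \leq \sqrt{\frac{a}{b}}\,(4/c)^{|U\setminus T|/2}.$$
   Context: $N=\{1,2,\ldots,n\}$. For $S\subseteq N$ and $y\in\mathbb{R}^n$, $y_S=\prod_{i\in S}y_i$. For a multilinear polynomial $f:\mathbb{R}^n\to\mathbb{R}$ and $\mu\in\mathbb{R}^n$, the numbers $\bar f(S,\mu)$ ($S\subseteq N$) are the unique coefficients such that $f(x)=\sum_{S\subseteq N}\bar f(S,\mu)\prod_{i\in S}(x_i-\mu_i)$ for all $x$. For events $A,B$, $\Pr[A\mid B]$ is defined to be $0$ when $\Pr[B]=0$. *)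

theory Defs
  imports "HOL-Probability.Probability"
begin

text \<open>Vectors in R^n are functions nat => real, indexed by N = {1..n}.\<close>

definition multilinear :: "nat \<Rightarrow> ((nat \<Rightarrow> real) \<Rightarrow> real) \<Rightarrow> bool" where
  "multilinear n f \<longleftrightarrow> (\<exists>\<alpha> :: nat set \<Rightarrow> real.
     \<forall>x. f x = (\<Sum>S\<in>Pow {1..n}. \<alpha> S * (\<Prod>i\<in>S. x i)))"

text \<open>The unique coefficients fbar(S,mu) with f(x) = sum_S fbar(S,mu) prod_{i in S} (x_i - mu_i);
  coefficients are normalised to 0 outside Pow N to make them unique.\<close>
definition fbar :: "nat \<Rightarrow> ((nat \<Rightarrow> real) \<Rightarrow> real) \<Rightarrow> nat set \<Rightarrow> (nat \<Rightarrow> real) \<Rightarrow> real" where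
  "fbar n f S \<mu> = (THE c :: nat set \<Rightarrow> real.
      (\<forall>R. R \<notin> Pow {1..n} \<longrightarrow> c R = 0) \<and>
      (\<forall>x. f x = (\<Sum>R\<in>Pow {1..n}. c R * (\<Prod>i\<in>R. (x i - \<mu> i))))) S"

definition unif_cube :: "nat \<Rightarrow> real \<Rightarrow> (nat \<Rightarrow> real) measure" where
  "unif_cube n c = PiM {1..n} (\<lambda>_. uniform_measure lborel {-c..c})"

definition cond_prob :: "'a measure \<Rightarrow> 'a set \<Rightarrow> 'a set \<Rightarrow> real" where
  "cond_prob M A B = (if measure M B = 0 then 0 else measure M (A \<inter> B) / measure M B)"

end

theory Submission
  imports Defs
begin

text \<open>
  Write \<open>F S \<mu>\<close> for \<open>fbar(S,\<mu>)\<close>. For \<open>j \<notin> S\<close>, \<open>F S\<close> is affine in \<open>\<mu> j\<close> with slope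
  \<open>F (S \<union> {j})\<close>, which does not depend on \<open>\<mu> j\<close>. The average of \<open>|q + t r|^(-1/2)\<close> over
  \<open>t \<in> [-c,c]\<close> is at most \<open>(4/c)^(1/2) |r|^(-1/2)\<close>, so integrating out the coordinates of
  \<open>U - T\<close> one at a time gives
  \<open>E[|F T|^(-1/2); B] \<le> (4/c)^(|U - T|/2) E[|F U|^(-1/2); B]\<close>
  for the event \<open>B = {|F U| \<ge> b}\<close>, which does not depend on the coordinates in \<open>U\<close>.
  On \<open>{|F T| \<le> a}\<close> the left integrand is at least \<open>a^(-1/2)\<close>, and on \<open>B\<close> the right one is at
  most \<open>b^(-1/2)\<close>.
\<close>

definition shifted_coeff :: "'a set \<Rightarrow> ('a set \<Rightarrow> real) \<Rightarrow> 'a set \<Rightarrow> ('a \<Rightarrow> real) \<Rightarrow> real" where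
  "shifted_coeff N \<alpha> S \<mu> = (\<Sum>R\<in>{R\<in>Pow N. S \<subseteq> R}. \<alpha> R * (\<Prod>i\<in>R - S. \<mu> i))"

lemma monomial_expansion_eq_shifted_expansion:
  assumes "finite N"
  shows "(\<Sum>R\<in>Pow N. \<alpha> R * (\<Prod>i\<in>R. x i)) =
         (\<Sum>S\<in>Pow N. shifted_coeff N \<alpha> S \<mu> * (\<Prod>i\<in>S. x i - \<mu> i))"
proof -
  have prod_expand: "(\<Prod>i\<in>R. x i) = (\<Sum>S\<in>{S\<in>Pow N. S \<subseteq> R}. (\<Prod>i\<in>S. x i - \<mu> i) * (\<Prod>i\<in>R - S. \<mu> i))"
    if "R \<in> Pow N" for R
  proof -
    have "Pow R = {S\<in>Pow N. S \<subseteq> R}" using that by auto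
    moreover have "finite R" using that assms finite_subset by blast
    ultimately show ?thesis using prod_add[of R "\<lambda>i. x i - \<mu> i" \<mu>] by simp
  qed
  have "(\<Sum>R\<in>Pow N. \<alpha> R * (\<Prod>i\<in>R. x i)) =
      (\<Sum>R\<in>Pow N. \<Sum>S\<in>{S\<in>Pow N. S \<subseteq> R}. \<alpha> R * ((\<Prod>i\<in>S. x i - \<mu> i) * (\<Prod>i\<in>R - S. \<mu> i)))"
    by (intro sum.cong refl) (simp add: prod_expand sum_distrib_left del: Pow_iff)
  also have "\<dots> = (\<Sum>S\<in>Pow N. \<Sum>R\<in>{R\<in>Pow N. S \<subseteq> R}. \<alpha> R * ((\<Prod>i\<in>S. x i - \<mu> i) * (\<Prod>i\<in>R - S. \<mu> i)))"
    by (rule sum.swap_restrict) (use assms in auto)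
  also have "\<dots> = (\<Sum>S\<in>Pow N. shifted_coeff N \<alpha> S \<mu> * (\<Prod>i\<in>S. x i - \<mu> i))"
    unfolding shifted_coeff_def sum_distrib_right by (intro sum.cong refl) (simp add: algebra_simps)
  finally show ?thesis .
qed

lemma zero_if_subset_sums_zero:
  fixes e :: "'a set \<Rightarrow> real"
  assumes sums: "\<And>S. S \<subseteq> A \<Longrightarrow> (\<Sum>R\<in>Pow S. e R) = 0" and "finite A" "S \<subseteq> A"
  shows "e S = 0"
proof -
  have "finite S" using assms(2,3) finite_subset by blast
  then show ?thesis using \<open>S \<subseteq> A\<close>
  proof (induction S rule: finite_psubset_induct)
    case (psubset S)
    have "(\<Sum>R\<in>Pow S - {S}. e R) = 0"
      using psubset by (intro sum.neutral) auto
    moreover have "(\<Sum>R\<in>Pow S. e R) = e S + (\<Sum>R\<in>Pow S - {S}. e R)"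
      using psubset.hyps by (subst sum.remove[of _ S]) auto
    ultimately show ?case using sums[OF psubset.prems] by simp
  qed
qed

lemma shifted_expansion_unique:
  fixes d e :: "'a set \<Rightarrow> real"
  assumes "finite N" "S \<subseteq> N"
    and expansions_eq: "\<And>x. (\<Sum>R\<in>Pow N. d R * (\<Prod>i\<in>R. x i - \<mu> i)) =
                            (\<Sum>R\<in>Pow N. e R * (\<Prod>i\<in>R. x i - \<mu> i))"
  shows "d S = e S"
proof -
  have "(\<Sum>R\<in>Pow S'. d R - e R) = 0" if "S' \<subseteq> N" for S'
  proof -
    \<comment> \<open>at \<open>x = \<mu> + indicator S'\<close> exactly the terms with \<open>R \<subseteq> S'\<close> survive\<close>
    define x where "x i = \<mu> i + of_bool (i \<in> S')" for i
    have prod_x: "(\<Prod>i\<in>R. x i - \<mu> i) = of_bool (R \<subseteq> S')" if "finite R" for R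
      using that by (induction R rule: finite_induct) (auto simp: x_def)
    have "0 = (\<Sum>R\<in>Pow N. (d R - e R) * (\<Prod>i\<in>R. x i - \<mu> i))"
      using expansions_eq[of x] by (simp add: left_diff_distrib sum_subtractf)
    also have "\<dots> = (\<Sum>R\<in>Pow N. (d R - e R) * of_bool (R \<subseteq> S'))"
    proof (intro sum.cong refl)
      fix R assume "R \<in> Pow N"
      then have "finite R" using assms(1) finite_subset by blast
      then show "(d R - e R) * (\<Prod>i\<in>R. x i - \<mu> i) = (d R - e R) * of_bool (R \<subseteq> S')"
        by (simp add: prod_x)
    qed
    also have "\<dots> = (\<Sum>R\<in>Pow N \<inter> {R. R \<subseteq> S'}. d R - e R)"
      using assms(1) by simp
    also have "Pow N \<inter> {R. R \<subseteq> S'} = Pow S'"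
      using that by auto
    finally show ?thesis by simp
  qed
  then show ?thesis using zero_if_subset_sums_zero[of N "\<lambda>R. d R - e R" S] assms(1,2) by simp
qed

lemma fbar_eq_shifted_coeff:
  assumes f: "\<And>x. f x = (\<Sum>R\<in>Pow {1..n}. \<alpha> R * (\<Prod>i\<in>R. x i))" and "S \<subseteq> {1..n}"
  shows "fbar n f S \<mu> = shifted_coeff {1..n} \<alpha> S \<mu>"
proof -
  define c where "c R = (if R \<in> Pow {1..n} then shifted_coeff {1..n} \<alpha> R \<mu> else 0)" for R
  have expansion: "f x = (\<Sum>R\<in>Pow {1..n}. c R * (\<Prod>i\<in>R. (x i - \<mu> i)))" for x
  proof -
    have "f x = (\<Sum>R\<in>Pow {1..n}. shifted_coeff {1..n} \<alpha> R \<mu> * (\<Prod>i\<in>R. x i - \<mu> i))"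
      using f monomial_expansion_eq_shifted_expansion[of "{1..n}" \<alpha> x \<mu>] by simp
    also have "\<dots> = (\<Sum>R\<in>Pow {1..n}. c R * (\<Prod>i\<in>R. x i - \<mu> i))"
      by (rule sum.cong) (auto simp: c_def)
    finally show ?thesis .
  qed
  have "(THE c'. (\<forall>R. R \<notin> Pow {1..n} \<longrightarrow> c' R = 0) \<and>
                 (\<forall>x. f x = (\<Sum>R\<in>Pow {1..n}. c' R * (\<Prod>i\<in>R. (x i - \<mu> i))))) = c"
  proof (rule the_equality)
    fix c' assume c': "(\<forall>R. R \<notin> Pow {1..n} \<longrightarrow> c' R = 0) \<and>
                       (\<forall>x. f x = (\<Sum>R\<in>Pow {1..n}. c' R * (\<Prod>i\<in>R. (x i - \<mu> i))))"
    show "c' = c"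
    proof
      fix R
      show "c' R = c R"
        using c' expansion shifted_expansion_unique[of "{1..n}" R c' \<mu> c]
        by (cases "R \<in> Pow {1..n}") (auto simp: c_def)
    qed
  qed (use expansion in \<open>auto simp: c_def\<close>)
  then show ?thesis using assms(2) by (simp add: fbar_def c_def)
qed

lemma shifted_coeff_fun_upd_member:
  "j \<in> S \<Longrightarrow> shifted_coeff N \<alpha> S (\<mu>(j := v)) = shifted_coeff N \<alpha> S \<mu>"
  unfolding shifted_coeff_def by (intro sum.cong refl arg_cong2[where f = "(*)"] prod.cong) auto

lemma shifted_coeff_split:
  assumes "finite N" "j \<notin> S"
  shows "shifted_coeff N \<alpha> S \<mu> =
           shifted_coeff N \<alpha> S (\<mu>(j := 0)) + \<mu> j * shifted_coeff N \<alpha> (insert j S) \<mu>"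
proof -
  let ?A = "{R\<in>Pow N. S \<subseteq> R}"
  have term_split: "\<alpha> R * (\<Prod>i\<in>R - S. \<mu> i) = \<alpha> R * (\<Prod>i\<in>R - S. (\<mu>(j := 0)) i)
      + (if j \<in> R then \<mu> j * (\<alpha> R * (\<Prod>i\<in>R - insert j S. \<mu> i)) else 0)"
    if "R \<in> ?A" for R
  proof (cases "j \<in> R")
    case True
    have fin: "finite (R - S)" and j: "j \<in> R - S"
      using that True assms finite_subset by auto
    have "(\<Prod>i\<in>R - S. \<mu> i) = \<mu> j * (\<Prod>i\<in>R - S - {j}. \<mu> i)"
      using fin j by (rule prod.remove)
    moreover have "R - S - {j} = R - insert j S"
      by auto
    moreover have "(\<Prod>i\<in>R - S. (\<mu>(j := 0)) i) = 0"
      using fin j by (intro prod_zero) auto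
    ultimately show ?thesis using True by simp
  next
    case False
    then show ?thesis by (auto intro!: prod.cong)
  qed
  have "shifted_coeff N \<alpha> S \<mu> = shifted_coeff N \<alpha> S (\<mu>(j := 0))
      + (\<Sum>R\<in>?A. if j \<in> R then \<mu> j * (\<alpha> R * (\<Prod>i\<in>R - insert j S. \<mu> i)) else 0)"
    unfolding shifted_coeff_def sum.distrib[symmetric] by (intro sum.cong refl term_split)
  also have "(\<Sum>R\<in>?A. if j \<in> R then \<mu> j * (\<alpha> R * (\<Prod>i\<in>R - insert j S. \<mu> i)) else 0)
      = (\<Sum>R\<in>{R\<in>?A. j \<in> R}. \<mu> j * (\<alpha> R * (\<Prod>i\<in>R - insert j S. \<mu> i)))"
    using assms(1) by (intro sum.inter_filter[symmetric]) simp
  also have "{R\<in>?A. j \<in> R} = {R\<in>Pow N. insert j S \<subseteq> R}"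
    by auto
  finally show ?thesis
    unfolding shifted_coeff_def sum_distrib_left .
qed

text \<open>\<open>sqrt\<close> is odd on negative arguments, which is why no bound on \<open>t\<close> is needed.\<close>

lemma sqrt_diff_add_sqrt_add_le:
  fixes c t :: real
  assumes "0 < c"
  shows "sqrt (c - t) + sqrt (c + t) \<le> 2 * sqrt c"
proof -
  have "sqrt (c - s) + sqrt (c + s) \<le> 2 * sqrt c" if "0 \<le> s" for s
  proof (cases "s \<le> c")
    case True
    have "(sqrt (c - s) + sqrt (c + s))\<^sup>2 = (c - s) + (c + s) + 2 * (sqrt (c - s) * sqrt (c + s))"
      using True that by (simp add: power2_sum)
    also have "sqrt (c - s) * sqrt (c + s) = sqrt ((c - s) * (c + s))"
      by (rule real_sqrt_mult[symmetric])
    also have "sqrt ((c - s) * (c + s)) \<le> c"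
      using True that assms by (intro real_le_lsqrt) (auto simp: algebra_simps power2_eq_square)
    finally have "(sqrt (c - s) + sqrt (c + s))\<^sup>2 \<le> (2 * sqrt c)\<^sup>2"
      using assms by (simp add: power_mult_distrib)
    then show ?thesis
      by (rule power2_le_imp_le) (use assms in simp)
  next
    case False
    have "sqrt (c + s) \<le> sqrt (s - c) + sqrt (2 * c)"
      using False assms sqrt_add_le_add_sqrt[of "s - c" "2 * c"] by simp
    also have "sqrt (2 * c) \<le> sqrt (4 * c)"
      using assms by simp
    also have "sqrt (4 * c) = sqrt 4 * sqrt c"
      by (rule real_sqrt_mult)
    finally show ?thesis
      using real_sqrt_minus[of "s - c"] by simp
  qed
  from this[of "\<bar>t\<bar>"] show ?thesis
    by (cases "0 \<le> t") (simp_all add: add.commute)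
qed

lemma sqrt_diff_add_sqrt_add_nonneg:
  fixes c t :: real
  assumes "0 \<le> c"
  shows "0 \<le> sqrt (c - t) + sqrt (c + t)"
  using assms real_sqrt_minus[of "t - c"] real_sqrt_le_mono[of "t - c" "c + t"] by simp

lemma has_integral_inv_sqrt_abs_diff:
  fixes c t\<^sub>0 :: real
  assumes "0 < c"
  shows "((\<lambda>t. 1 / sqrt \<bar>t - t\<^sub>0\<bar>) has_integral 2 * sqrt (c - t\<^sub>0) + 2 * sqrt (c + t\<^sub>0)) {-c..c}"
proof -
  have "((\<lambda>t. 1 / sqrt \<bar>t - t\<^sub>0\<bar>) has_integral 2 * sqrt (c - t\<^sub>0) - 2 * sqrt (- c - t\<^sub>0)) {-c..c}"
  proof (rule fundamental_theorem_of_calculus_interior_strong[where S = "{t\<^sub>0}"])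
    fix x assume x: "x \<in> {-c<..<c} - {t\<^sub>0}"
    have "(sqrt has_real_derivative 1 / (2 * sqrt \<bar>x - t\<^sub>0\<bar>)) (at (x - t\<^sub>0))"
    proof (rule DERIV_real_sqrt_generic)
      assume "x - t\<^sub>0 < 0"
      then show "1 / (2 * sqrt \<bar>x - t\<^sub>0\<bar>) = - inverse (sqrt (x - t\<^sub>0)) / 2"
        using real_sqrt_minus[of "t\<^sub>0 - x"] by (simp add: divide_simps)
    qed (use x in \<open>auto simp: divide_simps\<close>)
    moreover have "((\<lambda>t. t - t\<^sub>0) has_real_derivative 1) (at x)"
      by (auto intro!: derivative_eq_intros)
    ultimately have "((\<lambda>t. sqrt (t - t\<^sub>0)) has_real_derivative 1 / (2 * sqrt \<bar>x - t\<^sub>0\<bar>)) (at x)"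
      using DERIV_chain2 by fastforce
    from DERIV_cmult[OF this, of 2]
    show "((\<lambda>t. 2 * sqrt (t - t\<^sub>0)) has_vector_derivative 1 / sqrt \<bar>x - t\<^sub>0\<bar>) (at x)"
      by (simp add: has_real_derivative_iff_has_vector_derivative)
  next
    show "continuous_on {-c..c} (\<lambda>t. 2 * sqrt (t - t\<^sub>0))"
      by (intro continuous_intros)
  qed (use assms in auto)
  then show ?thesis
    using real_sqrt_minus[of "c + t\<^sub>0"] by (simp add: algebra_simps)
qed

text \<open>\<open>|x|^(-1/2)\<close>, with value \<open>\<infinity>\<close> at \<open>0\<close> so that it is multiplicative and bounds
  \<open>a^(-1/2)\<close> on all of \<open>{|x| \<le> a}\<close>.\<close>

definition inv_sqrt_abs :: "real \<Rightarrow> ennreal" where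
  "inv_sqrt_abs x = (if x = 0 then \<infinity> else ennreal (1 / sqrt \<bar>x\<bar>))"

lemma borel_measurable_inv_sqrt_abs [measurable]: "inv_sqrt_abs \<in> borel_measurable borel"
  unfolding inv_sqrt_abs_def by measurable

lemma inv_sqrt_abs_mult: "inv_sqrt_abs (x * y) = inv_sqrt_abs x * inv_sqrt_abs y"
  by (auto simp: inv_sqrt_abs_def abs_mult real_sqrt_mult ennreal_mult[symmetric]
      ennreal_mult_top ennreal_top_mult)

lemma one_le_sqrt_mult_inv_sqrt_abs:
  "0 < a \<Longrightarrow> \<bar>x\<bar> \<le> a \<Longrightarrow> 1 \<le> ennreal (sqrt a) * inv_sqrt_abs x"
  by (auto simp: inv_sqrt_abs_def ennreal_mult_top ennreal_mult[symmetric] field_simps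
      simp del: ennreal_1 intro!: ennreal_leI)

lemma inv_sqrt_abs_le: "0 < b \<Longrightarrow> b \<le> \<bar>x\<bar> \<Longrightarrow> inv_sqrt_abs x \<le> ennreal (1 / sqrt b)"
  by (auto simp: inv_sqrt_abs_def intro!: ennreal_leI divide_left_mono)

lemma nn_integral_uniform_inv_sqrt_abs_diff_le:
  fixes c t\<^sub>0 :: real
  assumes "0 < c"
  shows "(\<integral>\<^sup>+t. inv_sqrt_abs (t - t\<^sub>0) \<partial>uniform_measure lborel {-c..c}) \<le> ennreal (sqrt (4 / c))"
proof -
  have "AE t in lborel. inv_sqrt_abs (t - t\<^sub>0) * indicator {-c..c} t
                          = ennreal (1 / sqrt \<bar>t - t\<^sub>0\<bar>) * indicator {-c..c} t"
    using AE_lborel_singleton[of t\<^sub>0] by eventually_elim (simp add: inv_sqrt_abs_def)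
  then have "(\<integral>\<^sup>+t. inv_sqrt_abs (t - t\<^sub>0) * indicator {-c..c} t \<partial>lborel)
      = (\<integral>\<^sup>+t. ennreal (1 / sqrt \<bar>t - t\<^sub>0\<bar>) * indicator {-c..c} t \<partial>lborel)"
    by (rule nn_integral_cong_AE)
  also have "\<dots> = ennreal (2 * sqrt (c - t\<^sub>0) + 2 * sqrt (c + t\<^sub>0))"
    by (rule nn_integral_has_integral_lebesgue'[OF _ has_integral_inv_sqrt_abs_diff[OF assms]]) simp
  finally have "(\<integral>\<^sup>+t. inv_sqrt_abs (t - t\<^sub>0) \<partial>uniform_measure lborel {-c..c})
      = ennreal (2 * sqrt (c - t\<^sub>0) + 2 * sqrt (c + t\<^sub>0)) / ennreal (2 * c)"
    using assms by (simp add: nn_integral_uniform_measure)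
  also have "\<dots> = ennreal ((2 * sqrt (c - t\<^sub>0) + 2 * sqrt (c + t\<^sub>0)) / (2 * c))"
    using assms sqrt_diff_add_sqrt_add_nonneg[of c t\<^sub>0] by (intro divide_ennreal) auto
  also have "\<dots> \<le> ennreal (4 * sqrt c / (2 * c))"
    using assms sqrt_diff_add_sqrt_add_le[OF assms, of t\<^sub>0] by (intro ennreal_leI divide_right_mono) auto
  also have "4 * sqrt c / (2 * c) = sqrt (4 / c)"
    using assms by (simp add: real_sqrt_divide field_simps)
  finally show ?thesis .
qed

lemma nn_integral_uniform_inv_sqrt_abs_affine_le:
  fixes c q r :: real
  assumes "0 < c"
  shows "(\<integral>\<^sup>+t. inv_sqrt_abs (q + t * r) \<partial>uniform_measure lborel {-c..c})
           \<le> ennreal (sqrt (4 / c)) * inv_sqrt_abs r"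
proof (cases "r = 0")
  case True
  then show ?thesis using assms by (simp add: inv_sqrt_abs_def ennreal_mult_top)
next
  case False
  then have "q + t * r = r * (t - (- q / r))" for t
    by (simp add: field_simps)
  then have "(\<integral>\<^sup>+t. inv_sqrt_abs (q + t * r) \<partial>uniform_measure lborel {-c..c})
      = inv_sqrt_abs r * (\<integral>\<^sup>+t. inv_sqrt_abs (t - (- q / r)) \<partial>uniform_measure lborel {-c..c})"
    by (simp add: inv_sqrt_abs_mult nn_integral_cmult)
  also have "\<dots> \<le> inv_sqrt_abs r * ennreal (sqrt (4 / c))"
    by (intro mult_left_mono nn_integral_uniform_inv_sqrt_abs_diff_le assms) simp
  finally show ?thesis by (simp add: mult.commute)
qed

lemma borel_measurable_component_uniform:
  assumes "i \<in> N"
  shows "(\<lambda>\<Delta>. \<Delta> i) \<in> borel_measurable (PiM N (\<lambda>_. uniform_measure lborel {-c..c}))"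
proof -
  have "(\<lambda>\<Delta>. \<Delta> i) \<in> measurable (PiM N (\<lambda>_. uniform_measure lborel {-c..c})) (uniform_measure lborel {-c..c})"
    using assms by (rule measurable_component_singleton)
  also have "measurable (PiM N (\<lambda>_. uniform_measure lborel {-c..c})) (uniform_measure lborel {-c..c})
      = borel_measurable (PiM N (\<lambda>_. uniform_measure lborel {-c..c}))"
    by (rule measurable_cong_sets) auto
  finally show ?thesis .
qed

lemma borel_measurable_shifted_coeff_uniform [measurable]:
  "(\<lambda>\<Delta>. shifted_coeff N \<alpha> S (\<lambda>i. \<nu> i + \<Delta> i))
     \<in> borel_measurable (PiM N (\<lambda>_. uniform_measure lborel {-c..c}))"
  unfolding shifted_coeff_def
  by (intro borel_measurable_sum borel_measurable_times borel_measurable_const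
      borel_measurable_prod borel_measurable_add borel_measurable_component_uniform) auto

lemma nn_integral_inv_sqrt_abs_shifted_coeff_insert_le:
  fixes h :: "('a \<Rightarrow> real) \<Rightarrow> ennreal"
  assumes c: "0 < c" and N: "finite N" "j \<in> N" and "j \<notin> S"
    and h_meas [measurable]: "h \<in> borel_measurable (PiM N (\<lambda>_. uniform_measure lborel {-c..c}))"
    and h_inv: "\<And>\<Delta> t. h (\<Delta>(j := t)) = h \<Delta>"
  shows "(\<integral>\<^sup>+\<Delta>. inv_sqrt_abs (shifted_coeff N \<alpha> S (\<lambda>i. \<nu> i + \<Delta> i)) * h \<Delta>
            \<partial>PiM N (\<lambda>_. uniform_measure lborel {-c..c}))
         \<le> ennreal (sqrt (4 / c)) *
           (\<integral>\<^sup>+\<Delta>. inv_sqrt_abs (shifted_coeff N \<alpha> (insert j S) (\<lambda>i. \<nu> i + \<Delta> i)) * h \<Delta>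
              \<partial>PiM N (\<lambda>_. uniform_measure lborel {-c..c}))"
proof -
  let ?U = "uniform_measure lborel {-c..c}"
  let ?K = "ennreal (sqrt (4 / c))"
  define F where "F S' \<Delta> = shifted_coeff N \<alpha> S' (\<lambda>i. \<nu> i + \<Delta> i)" for S' \<Delta>
  interpret U: prob_space ?U
    by (rule prob_space_uniform_measure) (use c in auto)
  interpret product_sigma_finite "\<lambda>_. ?U"
    by (intro product_sigma_finite.intro U.sigma_finite_measure_axioms)
  have N_eq: "PiM N (\<lambda>_. ?U) = PiM (insert j (N - {j})) (\<lambda>_. ?U)"
    using N by (simp add: insert_absorb)
  have F_meas [measurable]: "F S' \<in> borel_measurable (PiM N (\<lambda>_. ?U))" for S'
    unfolding F_def[abs_def] by measurable
  have integrand_meas: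
    "(\<lambda>\<Delta>. inv_sqrt_abs (F S' \<Delta>) * h \<Delta>) \<in> borel_measurable (PiM N (\<lambda>_. ?U))"
    "(\<lambda>\<Delta>. ?K * inv_sqrt_abs (F S' \<Delta>) * h \<Delta>) \<in> borel_measurable (PiM N (\<lambda>_. ?U))" for S'
    by measurable
  have shift_upd: "(\<lambda>i. \<nu> i + (\<Delta>(j := y)) i) = (\<lambda>i. \<nu> i + \<Delta> i)(j := \<nu> j + y)" for \<Delta> y
    by auto
  have F_insert_upd: "F (insert j S) (\<Delta>(j := y)) = F (insert j S) \<Delta>" for \<Delta> y
    unfolding F_def shift_upd by (rule shifted_coeff_fun_upd_member) simp
  have zero_upd: "(\<lambda>i. \<nu> i + (\<Delta>(j := y)) i)(j := 0) = (\<lambda>i. \<nu> i + \<Delta> i)(j := 0)" for \<Delta> y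
    by auto
  have F_affine: "F S (\<Delta>(j := y)) =
      (shifted_coeff N \<alpha> S ((\<lambda>i. \<nu> i + \<Delta> i)(j := 0)) + \<nu> j * F (insert j S) \<Delta>)
      + y * F (insert j S) \<Delta>" for \<Delta> y
    using shifted_coeff_split[OF N(1) \<open>j \<notin> S\<close>, of \<alpha> "\<lambda>i. \<nu> i + (\<Delta>(j := y)) i"]
      F_insert_upd[of \<Delta> y]
    unfolding F_def zero_upd by (simp add: algebra_simps)
  have inner: "(\<integral>\<^sup>+y. inv_sqrt_abs (F S (\<Delta>(j := y))) * h (\<Delta>(j := y)) \<partial>?U)
      \<le> (\<integral>\<^sup>+y. ?K * inv_sqrt_abs (F (insert j S) (\<Delta>(j := y))) * h (\<Delta>(j := y)) \<partial>?U)" for \<Delta>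
  proof -
    have "(\<integral>\<^sup>+y. inv_sqrt_abs (F S (\<Delta>(j := y))) * h (\<Delta>(j := y)) \<partial>?U)
        = (\<integral>\<^sup>+y. inv_sqrt_abs (shifted_coeff N \<alpha> S ((\<lambda>i. \<nu> i + \<Delta> i)(j := 0))
              + \<nu> j * F (insert j S) \<Delta> + y * F (insert j S) \<Delta>) \<partial>?U) * h \<Delta>"
      unfolding F_affine h_inv by (rule nn_integral_multc) measurable
    also have "\<dots> \<le> ?K * inv_sqrt_abs (F (insert j S) \<Delta>) * h \<Delta>"
      by (intro mult_right_mono nn_integral_uniform_inv_sqrt_abs_affine_le c) simp
    also have "\<dots> = (\<integral>\<^sup>+y. ?K * inv_sqrt_abs (F (insert j S) (\<Delta>(j := y))) * h (\<Delta>(j := y)) \<partial>?U)"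
      unfolding F_insert_upd h_inv nn_integral_const U.emeasure_space_1 by simp
    finally show ?thesis .
  qed
  have "(\<integral>\<^sup>+\<Delta>. inv_sqrt_abs (F S \<Delta>) * h \<Delta> \<partial>PiM N (\<lambda>_. ?U))
      = (\<integral>\<^sup>+\<Delta>. \<integral>\<^sup>+y. inv_sqrt_abs (F S (\<Delta>(j := y))) * h (\<Delta>(j := y)) \<partial>?U \<partial>PiM (N - {j}) (\<lambda>_. ?U))"
    unfolding N_eq by (rule product_nn_integral_insert) (use N integrand_meas[unfolded N_eq] in auto)
  also have "\<dots> \<le> (\<integral>\<^sup>+\<Delta>. \<integral>\<^sup>+y. ?K * inv_sqrt_abs (F (insert j S) (\<Delta>(j := y))) * h (\<Delta>(j := y)) \<partial>?U
                     \<partial>PiM (N - {j}) (\<lambda>_. ?U))"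
    by (intro nn_integral_mono inner)
  also have "\<dots> = (\<integral>\<^sup>+\<Delta>. ?K * inv_sqrt_abs (F (insert j S) \<Delta>) * h \<Delta> \<partial>PiM N (\<lambda>_. ?U))"
    unfolding N_eq by (rule product_nn_integral_insert[symmetric]) (use N integrand_meas[unfolded N_eq] in auto)
  also have "\<dots> = ?K * (\<integral>\<^sup>+\<Delta>. inv_sqrt_abs (F (insert j S) \<Delta>) * h \<Delta> \<partial>PiM N (\<lambda>_. ?U))"
    unfolding mult.assoc by (rule nn_integral_cmult) measurable
  finally show ?thesis
    unfolding F_def .
qed

lemma nn_integral_inv_sqrt_abs_shifted_coeff_le:
  fixes h :: "('a \<Rightarrow> real) \<Rightarrow> ennreal"
  assumes c: "0 < c" and N: "finite N" and "D \<subseteq> N" "S \<inter> D = {}"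
    and h_meas: "h \<in> borel_measurable (PiM N (\<lambda>_. uniform_measure lborel {-c..c}))"
    and h_inv: "\<And>\<Delta> j t. j \<in> D \<Longrightarrow> h (\<Delta>(j := t)) = h \<Delta>"
  shows "(\<integral>\<^sup>+\<Delta>. inv_sqrt_abs (shifted_coeff N \<alpha> S (\<lambda>i. \<nu> i + \<Delta> i)) * h \<Delta>
            \<partial>PiM N (\<lambda>_. uniform_measure lborel {-c..c}))
         \<le> ennreal (sqrt (4 / c)) ^ card D *
           (\<integral>\<^sup>+\<Delta>. inv_sqrt_abs (shifted_coeff N \<alpha> (S \<union> D) (\<lambda>i. \<nu> i + \<Delta> i)) * h \<Delta>
              \<partial>PiM N (\<lambda>_. uniform_measure lborel {-c..c}))"
proof -
  let ?K = "ennreal (sqrt (4 / c))"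
  let ?I = "\<lambda>S'. (\<integral>\<^sup>+\<Delta>. inv_sqrt_abs (shifted_coeff N \<alpha> S' (\<lambda>i. \<nu> i + \<Delta> i)) * h \<Delta>
                    \<partial>PiM N (\<lambda>_. uniform_measure lborel {-c..c}))"
  have "finite D"
    using N \<open>D \<subseteq> N\<close> finite_subset by blast
  then show ?thesis
    using \<open>D \<subseteq> N\<close> \<open>S \<inter> D = {}\<close> h_inv
  proof (induction D arbitrary: S rule: finite_induct)
    case empty
    then show ?case by simp
  next
    case (insert j D)
    have "h (\<Delta>(j := t)) = h \<Delta>" for \<Delta> t
      by (rule insert.prems(3)) simp
    then have "?I S \<le> ?K * ?I (insert j S)"
      using insert.prems(1,2)
      by (intro nn_integral_inv_sqrt_abs_shifted_coeff_insert_le c N h_meas) auto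
    also have "\<dots> \<le> ?K * (?K ^ card D * ?I (insert j S \<union> D))"
      by (intro mult_left_mono insert.IH) (use insert in auto)
    also have "\<dots> = ?K ^ card (insert j D) * ?I (S \<union> insert j D)"
      using insert.hyps by (simp add: mult.assoc)
    finally show ?case .
  qed
qed

lemma cond_prob_le_inv_sqrt_abs_moments:
  fixes X Y :: "'a \<Rightarrow> real"
  assumes "prob_space M"
    and [measurable]: "X \<in> borel_measurable M" "Y \<in> borel_measurable M"
    and "0 < a" "0 < b" "0 \<le> K"
  defines "B \<equiv> {\<omega> \<in> space M. b \<le> \<bar>Y \<omega>\<bar>}"
  assumes moments: "(\<integral>\<^sup>+\<omega>. inv_sqrt_abs (X \<omega>) * indicator B \<omega> \<partial>M)
                     \<le> ennreal K * (\<integral>\<^sup>+\<omega>. inv_sqrt_abs (Y \<omega>) * indicator B \<omega> \<partial>M)"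
  shows "cond_prob M {\<omega> \<in> space M. \<bar>X \<omega>\<bar> \<le> a} B \<le> sqrt (a / b) * K"
proof -
  interpret prob_space M by fact
  define A where "A = {\<omega> \<in> space M. \<bar>X \<omega>\<bar> \<le> a}"
  have [measurable]: "A \<in> sets M" "B \<in> sets M"
    unfolding A_def B_def by measurable
  have "emeasure M (A \<inter> B) = (\<integral>\<^sup>+\<omega>. indicator (A \<inter> B) \<omega> \<partial>M)"
    by simp
  also have "\<dots> \<le> (\<integral>\<^sup>+\<omega>. ennreal (sqrt a) * (inv_sqrt_abs (X \<omega>) * indicator B \<omega>) \<partial>M)"
    using one_le_sqrt_mult_inv_sqrt_abs[OF \<open>0 < a\<close>]
    by (intro nn_integral_mono) (auto simp: A_def split: split_indicator)
  also have "\<dots> = ennreal (sqrt a) * (\<integral>\<^sup>+\<omega>. inv_sqrt_abs (X \<omega>) * indicator B \<omega> \<partial>M)"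
    by (rule nn_integral_cmult) measurable
  also have "\<dots> \<le> ennreal (sqrt a) * (ennreal K * (\<integral>\<^sup>+\<omega>. inv_sqrt_abs (Y \<omega>) * indicator B \<omega> \<partial>M))"
    by (intro mult_left_mono moments) simp
  also have "(\<integral>\<^sup>+\<omega>. inv_sqrt_abs (Y \<omega>) * indicator B \<omega> \<partial>M) \<le> (\<integral>\<^sup>+\<omega>. ennreal (1 / sqrt b) * indicator B \<omega> \<partial>M)"
    using inv_sqrt_abs_le[OF \<open>0 < b\<close>]
    by (intro nn_integral_mono) (auto simp: B_def split: split_indicator)
  also have "\<dots> = ennreal (1 / sqrt b) * emeasure M B"
    by (rule nn_integral_cmult_indicator) measurable
  finally have "emeasure M (A \<inter> B) \<le> ennreal (sqrt a) * (ennreal K * (ennreal (1 / sqrt b) * emeasure M B))"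
    by (simp add: mult_left_mono)
  also have "\<dots> = ennreal (sqrt (a / b) * K * prob B)"
    using assms(4-6) by (simp add: emeasure_eq_measure ennreal_mult[symmetric] real_sqrt_divide mult_ac)
  finally have "prob (A \<inter> B) \<le> sqrt (a / b) * K * prob B"
    using assms(4-6) by (simp add: emeasure_eq_measure ennreal_le_iff)
  then show ?thesis
    unfolding cond_prob_def A_def[symmetric] using assms(4-6) by (auto simp: divide_le_eq)
qed

lemma prob_space_unif_cube: "0 < c \<Longrightarrow> prob_space (unif_cube n c)"
  unfolding unif_cube_def
  by (rule prob_space_PiM, rule prob_space_uniform_measure) auto

lemma indicator_shifted_coeff_event_fun_upd:
  assumes "j \<in> S" "j \<in> N"
  shows "indicator {\<Delta> \<in> space (PiM N (\<lambda>_. uniform_measure lborel {-c..c})).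
                      P (shifted_coeff N \<alpha> S (\<lambda>i. \<nu> i + \<Delta> i))} (\<Delta>(j := t))
       = indicator {\<Delta> \<in> space (PiM N (\<lambda>_. uniform_measure lborel {-c..c})).
                      P (shifted_coeff N \<alpha> S (\<lambda>i. \<nu> i + \<Delta> i))} \<Delta>"
proof -
  let ?P = "PiM N (\<lambda>_. uniform_measure lborel {-c..c})"
  have "g(j := s) \<in> space ?P" if "g \<in> space ?P" for g s
    using PiE_fun_upd[of s "\<lambda>_. UNIV" j g N] that assms(2) by (simp add: space_PiM insert_absorb)
  then have space_upd: "\<Delta>(j := t) \<in> space ?P \<longleftrightarrow> \<Delta> \<in> space ?P"
    by (metis fun_upd_triv fun_upd_upd)
  have "(\<lambda>i. \<nu> i + (\<Delta>(j := t)) i) = (\<lambda>i. \<nu> i + \<Delta> i)(j := \<nu> j + t)"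
    by auto
  then have "shifted_coeff N \<alpha> S (\<lambda>i. \<nu> i + (\<Delta>(j := t)) i) = shifted_coeff N \<alpha> S (\<lambda>i. \<nu> i + \<Delta> i)"
    using assms(1) by (simp add: shifted_coeff_fun_upd_member)
  with space_upd show ?thesis
    by (simp add: indicator_def)
qed

theorem lemma1:
  fixes n :: nat and c a b :: real and \<mu>bar :: "nat \<Rightarrow> real"
    and f :: "(nat \<Rightarrow> real) \<Rightarrow> real" and T U :: "nat set"
  assumes "0 < c" "c < 1/2"
    and "\<forall>i\<in>{1..n}. \<mu>bar i \<in> {-1 + c..1 - c}"
    and "multilinear n f"
    and "T \<subseteq> U" "U \<subseteq> {1..n}"
    and "0 < a" "0 < b"
  shows "cond_prob (unif_cube n c)
           {\<Delta> \<in> space (unif_cube n c). \<bar>fbar n f T (\<lambda>i. \<mu>bar i + \<Delta> i)\<bar> \<le> a}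
           {\<Delta> \<in> space (unif_cube n c). \<bar>fbar n f U (\<lambda>i. \<mu>bar i + \<Delta> i)\<bar> \<ge> b}
         \<le> sqrt (a / b) * (4 / c) powr (real (card (U - T)) / 2)"
proof -
  obtain \<alpha> where f: "\<And>x. f x = (\<Sum>S\<in>Pow {1..n}. \<alpha> S * (\<Prod>i\<in>S. x i))"
    using \<open>multilinear n f\<close> unfolding multilinear_def by blast
  let ?M = "unif_cube n c"
  let ?F = "\<lambda>S \<Delta>. shifted_coeff {1..n} \<alpha> S (\<lambda>i. \<mu>bar i + \<Delta> i)"
  define B where "B = {\<Delta> \<in> space ?M. b \<le> \<bar>?F U \<Delta>\<bar>}"
  have fbar_eq: "S \<subseteq> {1..n} \<Longrightarrow> fbar n f S (\<lambda>i. \<mu>bar i + \<Delta> i) = ?F S \<Delta>" for S \<Delta>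
    using f by (rule fbar_eq_shifted_coeff)
  have B_inv: "indicator B (\<Delta>(j := t)) = (indicator B \<Delta> :: ennreal)" if "j \<in> U - T" for \<Delta> j t
    unfolding B_def unif_cube_def
    by (rule indicator_shifted_coeff_event_fun_upd) (use that \<open>U \<subseteq> {1..n}\<close> in auto)
  have "(\<integral>\<^sup>+\<Delta>. inv_sqrt_abs (?F T \<Delta>) * indicator B \<Delta> \<partial>?M)
      \<le> ennreal (sqrt (4 / c)) ^ card (U - T) * (\<integral>\<^sup>+\<Delta>. inv_sqrt_abs (?F U \<Delta>) * indicator B \<Delta> \<partial>?M)"
    using nn_integral_inv_sqrt_abs_shifted_coeff_le[of c "{1..n}" "U - T" T "indicator B" \<alpha> \<mu>bar]
      assms(1,5,6) B_inv
    by (auto simp: unif_cube_def B_def Un_absorb1)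
  then have "cond_prob ?M {\<Delta> \<in> space ?M. \<bar>?F T \<Delta>\<bar> \<le> a} B \<le> sqrt (a / b) * sqrt (4 / c) ^ card (U - T)"
    unfolding B_def using assms(1,7,8)
    by (intro cond_prob_le_inv_sqrt_abs_moments prob_space_unif_cube)
       (auto simp: unif_cube_def ennreal_power[symmetric] intro: borel_measurable_shifted_coeff_uniform)
  moreover have "(4 / c) powr (real (card (U - T)) / 2) = sqrt (4 / c) ^ card (U - T)"
    using assms(1) by (simp add: powr_half_sqrt_powr powr_realpow real_sqrt_power)
  ultimately show ?thesis
    using fbar_eq assms(5,6) by (simp add: B_def cong: conj_cong)
qed

end
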